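(* Let $k\ge2$ and let $g_1,g_2$ be densities on $(0,1)$ of the form $g_i(x)=\sum_{j=0}^{k-1}\beta_{i,j}\psi_{j+1}(x,1)+\beta_{i,k}\int_{(0,1)}\psi_k(x,\theta)\,dQ_i(\theta)$, $i=1,2$, with $(\beta_{i,0},\ldots,\beta_{i,k})\in\Delta_{k+1}$ and $Q_i$ probability measures on $(0,1)$. Set $\alpha_i=\beta_{i,0}$. Then $$|\alpha_1-\alpha_2|\le\sqrt{6\,\|g_1-g_2\|_1}.$$
   Context: $\psi_k(x,\theta)=\frac{k}{\theta}(1-\frac{x}{\theta})_+^{k-1}$ for $x,\theta>0$; in particular $\psi_1(\cdot,1)\equiv1$ on $(0,1)$. $\Delta_J=\{(w_1,\ldots,w_J)\in[0,1]^J:\sum_iw_i=1\}$. $\|\cdot\|_1$ is the $\mathbb{L}_1(0,1)$ norm. *)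

theory Defs
  imports "HOL-Probability.Probability"
begin

definition psi :: "nat \<Rightarrow> real \<Rightarrow> real \<Rightarrow> real" where
  "psi k x \<theta> = real k / \<theta> * (max 0 (1 - x / \<theta>)) ^ (k - 1)"

text \<open>Delta_J for J = k+1, coordinates indexed 0..k\<close>
definition simplexDelta :: "nat \<Rightarrow> (nat \<Rightarrow> real) \<Rightarrow> bool" where
  "simplexDelta k w \<longleftrightarrow> (\<forall>j\<le>k. w j \<in> {0..1}) \<and> (\<Sum>j\<le>k. w j) = 1"

definition prob_on_unit :: "real measure \<Rightarrow> bool" where
  "prob_on_unit Q \<longleftrightarrow> prob_space Q \<and> sets Q = sets borel \<and> measure Q {0<..<1} = 1"

definition mixdens :: "nat \<Rightarrow> (nat \<Rightarrow> real) \<Rightarrow> real measure \<Rightarrow> real \<Rightarrow> real" where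
  "mixdens k \<beta> Q x = (\<Sum>j<k. \<beta> j * psi (j+1) x 1) + \<beta> k * (\<integral>\<theta>. psi k x \<theta> \<partial>Q)"

end

theory Submission
  imports Defs
begin

text \<open>On \<open>[1/2,1)\<close> every kernel \<open>\<psi>\<^sub>j(x,\<theta>)\<close> with \<open>j \<ge> 2\<close> and \<open>0 < \<theta> \<le> 1\<close> is at most
  \<open>2(1 - x)\<close>, while \<open>\<psi>\<^sub>1(\<cdot>,1) = 1\<close>; since all weights are nonnegative and sum to one, each
  density \<open>g\<^sub>i\<close> lies between \<open>\<alpha>\<^sub>i\<close> and \<open>\<alpha>\<^sub>i + 2(1 - x)\<close> there. If \<open>\<delta> = \<alpha>\<^sub>1 - \<alpha>\<^sub>2 \<ge> 0\<close>,
  then \<open>g\<^sub>1 - g\<^sub>2 \<ge> \<delta> - 2(1 - x)\<close>, and integrating this ramp over \<open>(1 - \<delta>/2, 1)\<close> gives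
  \<open>\<parallel>g\<^sub>1 - g\<^sub>2\<parallel>\<^sub>1 \<ge> \<delta>\<^sup>2/4\<close>, which is stronger than the claim.\<close>

lemma of_nat_Suc_mult_power_le_double:
  fixes s :: real
  assumes "0 \<le> s" "s \<le> 1/2" "1 \<le> j"
  shows "real (Suc j) * s ^ j \<le> 2 * s"
proof -
  have half: "real (n + 2) * (1/2) ^ n \<le> 2" for n
  proof (induction n)
    case (Suc n)
    have "real (Suc n + 2) * (1/2) ^ Suc n = real (n + 3) / 2 * (1/2) ^ n" by simp
    also have "\<dots> \<le> real (n + 2) * (1/2) ^ n" by (intro mult_right_mono) auto
    finally show ?case using Suc by linarith
  qed simp
  obtain n where n: "j = n + 1" using assms(3) by (metis add.commute le_add_diff_inverse)
  have "real (Suc j) * s ^ j = real (n + 2) * s ^ n * s" by (simp add: n)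
  also have "\<dots> \<le> real (n + 2) * (1/2) ^ n * s"
    by (intro mult_right_mono mult_left_mono power_mono) (use assms in auto)
  also have "\<dots> \<le> 2 * s" using half[of n] assms by (intro mult_right_mono) auto
  finally show ?thesis .
qed

lemma psi_nonneg: "0 < \<theta> \<Longrightarrow> 0 \<le> psi k x \<theta>"
  unfolding psi_def by auto

lemma psi_one_one [simp]: "psi (Suc 0) x 1 = 1"
  unfolding psi_def by simp

lemma psi_le_near_one:
  assumes "2 \<le> k" "0 < \<theta>" "\<theta> \<le> 1" "1/2 \<le> x" "x < 1"
  shows "psi k x \<theta> \<le> 2 * (1 - x)"
proof (cases "\<theta> \<le> x")
  case True
  then have "max 0 (1 - x / \<theta>) = 0" using assms by (auto simp: field_simps)
  then show ?thesis using assms unfolding psi_def by (simp add: zero_power)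
next
  case False
  define s where "s = 1 - x"
  define u where "u = 1 - \<theta>"
  have su: "0 \<le> u" "u < s" "s \<le> 1/2" using assms False by (auto simp: s_def u_def)
  have "max 0 (1 - x / \<theta>) = (s - u) / (1 - u)"
    using False assms by (auto simp: s_def u_def field_simps)
  then have "psi k x \<theta> = real k * ((s - u) / (1 - u)) ^ (k - 1) / (1 - u)"
    unfolding psi_def by (simp add: u_def)
  also have "\<dots> = real k * (s - u) ^ (k - 1) / (1 - u) ^ k"
    using assms(1) by (simp add: power_divide power_eq_if[of "1 - u" k])
  also have "\<dots> \<le> real k * s ^ (k - 1)"
  proof -
    have "0 \<le> u * (1 - 2 * s)" "0 \<le> s * u\<^sup>2" using su by auto
    then have "s - u \<le> s * (1 - u)\<^sup>2" by (simp add: power2_eq_square algebra_simps)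
    then have "(s - u) ^ (k - 1) \<le> (s * (1 - u)\<^sup>2) ^ (k - 1)"
      by (rule power_mono) (use su in auto)
    also have "\<dots> = s ^ (k - 1) * (1 - u) ^ (2 * (k - 1))"
      by (simp add: power_mult_distrib power_mult)
    also have "\<dots> \<le> s ^ (k - 1) * (1 - u) ^ k"
      by (intro mult_left_mono power_decreasing) (use su assms in auto)
    finally have "(s - u) ^ (k - 1) \<le> s ^ (k - 1) * (1 - u) ^ k" .
    moreover have "0 < (1 - u) ^ k" using su by simp
    ultimately show ?thesis by (simp add: divide_le_eq mult.assoc mult_left_mono)
  qed
  also have "\<dots> \<le> 2 * s"
    using of_nat_Suc_mult_power_le_double[of s "k - 1"] su assms by (simp add: of_nat_diff)
  finally show ?thesis by (simp add: s_def)
qed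

lemma nn_integral_psi_le:
  assumes "2 \<le> k"
  shows "(\<integral>\<^sup>+x. ennreal (indicator {0<..<1} x * psi k x \<theta>) \<partial>lborel) \<le> real k"
proof (cases "0 < \<theta>")
  case False
  then have "indicator {0<..<1} x * psi k x \<theta> \<le> 0" for x :: real
    unfolding psi_def
    by (auto simp: indicator_def intro!: mult_nonpos_nonneg divide_nonneg_nonpos)
  then have "ennreal (indicator {0<..<1} x * psi k x \<theta>) = 0" for x :: real
    by (simp add: ennreal_eq_0_iff)
  then show ?thesis by simp
next
  case True
  have "ennreal (indicator {0<..<1} x * psi k x \<theta>) \<le> ennreal (real k / \<theta>) * indicator {0..\<theta>} x"
    for x :: real
  proof (cases "0 < x \<and> x \<le> \<theta>")
    case x: True
    then have "0 \<le> 1 - x / \<theta>" "1 - x / \<theta> \<le> 1" using True by (auto simp: field_simps)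
    then have "real k * (max 0 (1 - x / \<theta>)) ^ (k - 1) \<le> real k"
      by (intro mult_left_le power_le_one) auto
    then have "psi k x \<theta> \<le> real k / \<theta>"
      unfolding psi_def using True by (simp add: divide_right_mono)
    then show ?thesis using x by (simp add: indicator_def ennreal_leI)
  next
    case False
    then have "x \<le> 0 \<or> max 0 (1 - x / \<theta>) = 0" using True by (auto simp: field_simps)
    then show ?thesis using assms unfolding psi_def by (auto simp: indicator_def zero_power)
  qed
  then have "(\<integral>\<^sup>+x. ennreal (indicator {0<..<1} x * psi k x \<theta>) \<partial>lborel)
      \<le> (\<integral>\<^sup>+x. ennreal (real k / \<theta>) * indicator {0..\<theta>} x \<partial>lborel)"
    by (intro nn_integral_mono)
  also have "\<dots> = real k"
    using True by (simp add: nn_integral_cmult_indicator ennreal_mult[symmetric])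
  finally show ?thesis .
qed

lemma AE_prob_on_unit: "prob_on_unit Q \<Longrightarrow> AE \<theta> in Q. \<theta> \<in> {0<..<1::real}"
  unfolding prob_on_unit_def using prob_space.AE_prob_1 by blast

lemma psi_mixture_nonneg: "prob_on_unit Q \<Longrightarrow> 0 \<le> (\<integral>\<theta>. psi k x \<theta> \<partial>Q)"
  by (rule integral_nonneg_AE)
    (auto dest!: AE_prob_on_unit elim!: eventually_mono intro: psi_nonneg)

lemma psi_mixture_le_near_one:
  assumes Q: "prob_on_unit Q" and "2 \<le> k" "1/2 \<le> x" "x < 1"
  shows "(\<integral>\<theta>. psi k x \<theta> \<partial>Q) \<le> 2 * (1 - x)"
proof (cases "integrable Q (\<lambda>\<theta>. psi k x \<theta>)")
  case True
  interpret prob_space Q using Q unfolding prob_on_unit_def by simp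
  have "AE \<theta> in Q. psi k x \<theta> \<le> 2 * (1 - x)"
    using AE_prob_on_unit[OF Q]
    by (rule eventually_mono) (use psi_le_near_one[OF assms(2) _ _ assms(3,4)] in force)
  then have "(\<integral>\<theta>. psi k x \<theta> \<partial>Q) \<le> (\<integral>\<theta>. 2 * (1 - x) \<partial>Q)"
    using True by (intro integral_mono_AE) auto
  then show ?thesis by (simp add: prob_space)
qed (use assms in \<open>simp add: not_integrable_integral_eq\<close>)

lemma ennreal_psi_mixture_le:
  assumes Q: "prob_on_unit Q"
  shows "ennreal (\<integral>\<theta>. psi k x \<theta> \<partial>Q) \<le> (\<integral>\<^sup>+\<theta>. ennreal (psi k x \<theta>) \<partial>Q)"
proof (cases "integrable Q (\<lambda>\<theta>. psi k x \<theta>)")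
  case True
  have "AE \<theta> in Q. 0 \<le> psi k x \<theta>"
    using AE_prob_on_unit[OF Q] by (rule eventually_mono) (auto intro: psi_nonneg)
  then show ?thesis using nn_integral_eq_integral[OF True] by simp
qed (simp add: not_integrable_integral_eq)

lemma set_integrable_psi_mixture:
  assumes Q: "prob_on_unit Q" and "2 \<le> k"
  shows "set_integrable lborel {0<..<1::real} (\<lambda>x. \<integral>\<theta>. psi k x \<theta> \<partial>Q)"
proof -
  interpret Q: prob_space Q using Q unfolding prob_on_unit_def by simp
  interpret pair_sigma_finite lborel Q
    by (simp add: pair_sigma_finite_def lborel.sigma_finite_measure_axioms Q.sigma_finite_measure_axioms)
  have "sets (lborel \<Otimes>\<^sub>M Q) = sets (borel \<Otimes>\<^sub>M (borel :: real measure))"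
    using Q unfolding prob_on_unit_def by (intro sets_pair_measure_cong) auto
  moreover have "(\<lambda>p. psi k (fst p) (snd p)) \<in> borel_measurable (borel \<Otimes>\<^sub>M borel)"
    unfolding psi_def by measurable
  ultimately have [measurable]: "(\<lambda>p. psi k (fst p) (snd p)) \<in> borel_measurable (lborel \<Otimes>\<^sub>M Q)"
    using measurable_cong_sets by blast
  have "(\<lambda>x. \<integral>\<theta>. psi k x \<theta> \<partial>Q) \<in> borel_measurable lborel"
    by (rule Q.borel_measurable_lebesgue_integral) (simp add: split_beta')
  moreover have "(\<integral>\<^sup>+x. ennreal (indicator {0<..<1} x * (\<integral>\<theta>. psi k x \<theta> \<partial>Q)) \<partial>lborel) < \<infinity>"
  proof -
    have "(\<integral>\<^sup>+x. ennreal (indicator {0<..<1} x * (\<integral>\<theta>. psi k x \<theta> \<partial>Q)) \<partial>lborel)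
        \<le> (\<integral>\<^sup>+x. (\<integral>\<^sup>+\<theta>. ennreal (indicator {0<..<1::real} x * psi k x \<theta>) \<partial>Q) \<partial>lborel)"
      by (intro nn_integral_mono) (auto simp: indicator_def ennreal_psi_mixture_le[OF Q])
    \<comment> \<open>the mixture is unbounded near \<open>x = 0\<close>, so integrate in \<open>x\<close> first\<close>
    also have "\<dots> = (\<integral>\<^sup>+\<theta>. (\<integral>\<^sup>+x. ennreal (indicator {0<..<1::real} x * psi k x \<theta>) \<partial>lborel) \<partial>Q)"
      by (rule Fubini'[symmetric]) (unfold split_beta', measurable)
    also have "\<dots> \<le> (\<integral>\<^sup>+\<theta>. ennreal (real k) \<partial>Q)"
      by (intro nn_integral_mono nn_integral_psi_le assms)
    also have "\<dots> < \<infinity>" by (simp add: Q.emeasure_space_1)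
    finally show ?thesis .
  qed
  ultimately show ?thesis
    unfolding set_integrable_def
    by (intro integrableI_nonneg AE_I2) (auto simp: psi_mixture_nonneg[OF Q])
qed

lemma mixdens_eq:
  assumes "1 \<le> k"
  shows "mixdens k \<beta> Q x
    = \<beta> 0 + (\<Sum>j\<in>{1..<k}. \<beta> j * psi (j + 1) x 1) + \<beta> k * (\<integral>\<theta>. psi k x \<theta> \<partial>Q)"
proof -
  have "{..<k} = insert 0 {1..<k}" using assms by auto
  then show ?thesis unfolding mixdens_def by simp
qed

lemma simplexDelta_sum_eq:
  assumes "simplexDelta k \<beta>" "1 \<le> k"
  shows "\<beta> 0 + (\<Sum>j\<in>{1..<k}. \<beta> j) + \<beta> k = 1"
proof -
  have "{..k} = insert 0 (insert k {1..<k})" using assms(2) by auto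
  then show ?thesis using assms unfolding simplexDelta_def by (simp add: add.assoc)
qed

lemma mixdens_ge_weight0:
  assumes "prob_on_unit Q" "2 \<le> k" "simplexDelta k \<beta>"
  shows "\<beta> 0 \<le> mixdens k \<beta> Q x"
proof -
  have nn: "j \<le> k \<Longrightarrow> 0 \<le> \<beta> j" for j using assms(3) unfolding simplexDelta_def by auto
  have "0 \<le> (\<Sum>j\<in>{1..<k}. \<beta> j * psi (j + 1) x 1)"
    by (intro sum_nonneg mult_nonneg_nonneg nn psi_nonneg) auto
  moreover have "0 \<le> \<beta> k * (\<integral>\<theta>. psi k x \<theta> \<partial>Q)"
    using nn[of k] psi_mixture_nonneg[OF assms(1)] by simp
  ultimately show ?thesis using mixdens_eq[of k] assms(2) by simp
qed

lemma mixdens_le_near_one: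
  assumes "prob_on_unit Q" "2 \<le> k" "simplexDelta k \<beta>" "1/2 \<le> x" "x < 1"
  shows "mixdens k \<beta> Q x \<le> \<beta> 0 + 2 * (1 - x)"
proof -
  have nn: "j \<le> k \<Longrightarrow> 0 \<le> \<beta> j" for j using assms(3) unfolding simplexDelta_def by auto
  have "(\<Sum>j\<in>{1..<k}. \<beta> j * psi (j + 1) x 1) \<le> (\<Sum>j\<in>{1..<k}. \<beta> j * (2 * (1 - x)))"
    by (intro sum_mono mult_left_mono nn psi_le_near_one) (use assms in auto)
  moreover have "\<beta> k * (\<integral>\<theta>. psi k x \<theta> \<partial>Q) \<le> \<beta> k * (2 * (1 - x))"
    by (intro mult_left_mono nn psi_mixture_le_near_one) (use assms in auto)
  moreover have "((\<Sum>j\<in>{1..<k}. \<beta> j) + \<beta> k) * (2 * (1 - x)) \<le> 1 * (2 * (1 - x))"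
    using simplexDelta_sum_eq[OF assms(3)] nn[of 0] assms by (intro mult_right_mono) auto
  ultimately show ?thesis
    using mixdens_eq[of k] assms(2) by (simp add: sum_distrib_right distrib_right)
qed

lemma set_integrable_mixdens:
  assumes "prob_on_unit Q" "2 \<le> k"
  shows "set_integrable lborel {0<..<1::real} (mixdens k \<beta> Q)"
proof -
  have "continuous_on {0..1} (\<lambda>x. \<Sum>j<k. \<beta> j * psi (j + 1) x (1::real))"
    unfolding psi_def by (intro continuous_intros) auto
  then have "set_integrable lborel {0<..<1::real} (\<lambda>x. \<Sum>j<k. \<beta> j * psi (j + 1) x 1)"
    by (rule set_integrable_subset[OF borel_integrable_atLeastAtMost']) auto
  then show ?thesis
    unfolding mixdens_def[abs_def]
    using set_integrable_psi_mixture[OF assms] by (intro set_integral_add) auto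
qed

lemma set_integral_ramp:
  fixes t :: real
  assumes "0 \<le> t"
  shows "(LINT x:{1-t<..<1}|lborel. 2 * t - 2 * (1 - x)) = t\<^sup>2"
proof -
  have "(LINT x:{1-t<..<1}|lborel. 2 * t - 2 * (1 - x)) = (LBINT x=ereal (1-t)..ereal 1. 2 * t - 2 * (1 - x))"
    using assms by (subst interval_integral_Ioo) auto
  also have "\<dots> = (2 * t * 1 - 2 * 1 + 1\<^sup>2) - (2 * t * (1-t) - 2 * (1-t) + (1-t)\<^sup>2)"
  proof (rule interval_integral_FTC_finite)
    fix x :: real
    show "((\<lambda>x. 2 * t * x - 2 * x + x\<^sup>2) has_vector_derivative 2 * t - 2 * (1 - x))
        (at x within {min (1-t) 1..max (1-t) 1})"
      unfolding has_real_derivative_iff_has_vector_derivative[symmetric]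
      by (auto intro!: derivative_eq_intros simp: algebra_simps)
  qed (intro continuous_intros)
  also have "\<dots> = t\<^sup>2" by (simp add: power2_eq_square algebra_simps)
  finally show ?thesis .
qed

lemma square_le_integral_abs_diff:
  fixes f g :: "real \<Rightarrow> real"
  assumes f: "set_integrable lborel {0<..<1} f" and g: "set_integrable lborel {0<..<1} g"
    and "b \<le> a" "a \<le> b + 1"
    and lower: "\<And>x. 1/2 \<le> x \<Longrightarrow> x < 1 \<Longrightarrow> a \<le> f x"
    and upper: "\<And>x. 1/2 \<le> x \<Longrightarrow> x < 1 \<Longrightarrow> g x \<le> b + 2 * (1 - x)"
  shows "(a - b)\<^sup>2 \<le> 4 * (LINT x:{0<..<1}|lborel. \<bar>f x - g x\<bar>)"
proof -
  define t where "t = (a - b) / 2"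
  have t: "0 \<le> t" "t \<le> 1/2" using assms(3,4) by (auto simp: t_def)
  have "set_integrable lborel {1-t<..<1} (\<lambda>x. 2 * t - 2 * (1 - x))"
    by (rule set_integrable_subset[OF borel_integrable_atLeastAtMost'[of "1-t" 1]])
      (auto intro!: continuous_intros)
  moreover have "set_integrable lborel {0<..<1} (\<lambda>x. \<bar>f x - g x\<bar>)"
    using f g by (intro set_integrable_abs set_integral_diff)
  moreover have "indicator {1-t<..<1} x * (2 * t - 2 * (1 - x)) \<le> indicator {0<..<1} x * \<bar>f x - g x\<bar>"
    for x
  proof (cases "x \<in> {1-t<..<1}")
    case True
    then have "1/2 \<le> x" "x < 1" "0 < x" using t by auto
    then have "a \<le> f x" "g x \<le> b + 2 * (1 - x)" using lower upper by auto
    then have "2 * t - 2 * (1 - x) \<le> \<bar>f x - g x\<bar>" unfolding t_def by argo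
    then show ?thesis using True \<open>0 < x\<close> by simp
  qed simp
  ultimately have "(LINT x:{1-t<..<1}|lborel. 2 * t - 2 * (1 - x))
      \<le> (LINT x:{0<..<1}|lborel. \<bar>f x - g x\<bar>)"
    unfolding set_integrable_def set_lebesgue_integral_def by (intro integral_mono) auto
  then show ?thesis using set_integral_ramp[OF t(1)] by (simp add: t_def power_divide)
qed

theorem mainTheorem9:
  fixes k :: nat and \<beta>1 \<beta>2 :: "nat \<Rightarrow> real" and Q1 Q2 :: "real measure"
  assumes "k \<ge> 2"
    and "simplexDelta k \<beta>1" and "simplexDelta k \<beta>2"
    and "prob_on_unit Q1" and "prob_on_unit Q2"
  shows "\<bar>\<beta>1 0 - \<beta>2 0\<bar> \<le>
    sqrt (6 * (LINT x:{0<..<1::real}|lborel. \<bar>mixdens k \<beta>1 Q1 x - mixdens k \<beta>2 Q2 x\<bar>))"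
proof -
  let ?g1 = "mixdens k \<beta>1 Q1" and ?g2 = "mixdens k \<beta>2 Q2"
  define L where "L = (LINT x:{0<..<1::real}|lborel. \<bar>?g1 x - ?g2 x\<bar>)"
  have weights: "0 \<le> \<beta>1 0" "\<beta>1 0 \<le> 1" "0 \<le> \<beta>2 0" "\<beta>2 0 \<le> 1"
    using assms(2,3) unfolding simplexDelta_def by auto
  note bounds = set_integrable_mixdens mixdens_ge_weight0 mixdens_le_near_one
  have "(\<beta>1 0 - \<beta>2 0)\<^sup>2 \<le> 4 * L"
  proof (cases "\<beta>2 0 \<le> \<beta>1 0")
    case True
    show ?thesis unfolding L_def
      using True weights assms by (intro square_le_integral_abs_diff bounds) auto
  next
    case False
    have "(\<beta>2 0 - \<beta>1 0)\<^sup>2 \<le> 4 * (LINT x:{0<..<1::real}|lborel. \<bar>?g2 x - ?g1 x\<bar>)"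
      using False weights assms by (intro square_le_integral_abs_diff bounds) auto
    then show ?thesis unfolding L_def by (simp add: abs_minus_commute power2_commute)
  qed
  moreover have "0 \<le> L" unfolding L_def set_lebesgue_integral_def
    by (intro integral_nonneg_AE) (auto simp: indicator_def)
  ultimately have "\<bar>\<beta>1 0 - \<beta>2 0\<bar>\<^sup>2 \<le> 6 * L" by simp
  then show ?thesis unfolding L_def by (rule real_le_rsqrt)
qed

end
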